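(* Let $m,n$ be positive integers. (i) For every $A\in[0,1)^{m\times n}$, $\Lambda_A(m,n)=[0,1)^m\setminus\mathbf{Bad}_A(m,n)$. (ii) For every $\boldsymbol{\gamma}\in[0,1)^m$, $\Lambda^{\boldsymbol{\gamma}}(m,n)=[0,1)^{m\times n}\setminus\mathbf{Bad}^{\boldsymbol{\gamma}}(m,n)$.
   Context: $[0,1)^{m\times n}$ is the set of real $m\times n$ matrices with entries in $[0,1)$. For $\boldsymbol{x}\in\mathbb{R}^n$, $\|\boldsymbol{x}\|=\max_i|x_i|$; for $\boldsymbol{y}\in\mathbb{R}^m$, $\langle\boldsymbol{y}\rangle=\min_{\boldsymbol{p}\in\mathbb{Z}^m}\|\boldsymbol{y}-\boldsymbol{p}\|$. For $\psi:\mathbb{N}\to[0,\infty)$, $W_{m,n}(\psi)$ is the set of pairs $(A,\boldsymbol{\gamma})\in[0,1)^{m\times n}\times[0,1)^m$ such that $\langle A\boldsymbol{q}-\boldsymbol{\gamma}\rangle<\psi(\|\boldsymbol{q}\|)$ for infinitely many $\boldsymbol{q}\in\mathbb{Z}^n$. "Decreasing" means non-increasing. $\mathcal{C}$ is the set of decreasing $\psi:\mathbb{N}\to[0,\infty)$ with $\sum_{q\ge1}q^{n-1}\psi(q)^m<\infty$. $\Lambda(m,n)=\bigcup_{\psi\in\mathcal{C}}W_{m,n}(\psi)$, $\Lambda_A(m,n)=\{\boldsymbol{\gamma}:(A,\boldsymbol{\gamma})\in\Lambda(m,n)\}$, $\Lambda^{\boldsymbol{\gamma}}(m,n)=\{A:(A,\boldsymbol{\gamma})\in\Lambda(m,n)\}$.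 $\mathbf{Bad}(m,n)=\{(A,\boldsymbol{\gamma}):\liminf_{\boldsymbol{q}\in\mathbb{Z}^n,\|\boldsymbol{q}\|\to\infty}\|\boldsymbol{q}\|^n\langle A\boldsymbol{q}-\boldsymbol{\gamma}\rangle^m>0\}$, $\mathbf{Bad}_A(m,n)=\{\boldsymbol{\gamma}\in[0,1)^m:(A,\boldsymbol{\gamma})\in\mathbf{Bad}(m,n)\}$, $\mathbf{Bad}^{\boldsymbol{\gamma}}(m,n)=\{A\in[0,1)^{m\times n}:(A,\boldsymbol{\gamma})\in\mathbf{Bad}(m,n)\}$. *)

theory Defs
  imports "HOL-Analysis.Analysis"
begin

text \<open>Dimensions m = CARD('m), n = CARD('n) are encoded by finite index types.
  A real m x n matrix is \<open>real^'n^'m\<close>, an integer vector q is \<open>int^'n\<close>.\<close>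

definition unit_cube_vec :: "(real^'m) set" where
  "unit_cube_vec = {y. \<forall>i. 0 \<le> y$i \<and> y$i < 1}"

definition unit_cube_mat :: "(real^'n^'m) set" where
  "unit_cube_mat = {A. \<forall>i j. 0 \<le> A$i$j \<and> A$i$j < 1}"

definition qnorm :: "int^'n \<Rightarrow> nat" where
  "qnorm q = Max (range (\<lambda>i. nat \<bar>q$i\<bar>))"

definition supnorm :: "real^'m \<Rightarrow> real" where
  "supnorm y = Max (range (\<lambda>i. \<bar>y$i\<bar>))"

definition distZ :: "real^'m \<Rightarrow> real" where
  "distZ y = Inf {supnorm (y - (\<chi> i. of_int (p$i))) | p :: int^'m. True}"

definition matvec_int :: "real^'n^'m \<Rightarrow> int^'n \<Rightarrow> real^'m" where
  "matvec_int A q = A *v (\<chi> j. of_int (q$j))"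

definition W_set :: "(nat \<Rightarrow> real) \<Rightarrow> ((real^'n^'m) \<times> (real^'m)) set" where
  "W_set \<psi> = {(A :: real^'n^'m, \<gamma> :: real^'m). A \<in> unit_cube_mat \<and> \<gamma> \<in> unit_cube_vec \<and>
      infinite {q :: int^'n. distZ (matvec_int A q - \<gamma>) < \<psi> (qnorm q)}}"

definition class_C :: "nat \<Rightarrow> nat \<Rightarrow> (nat \<Rightarrow> real) set" where
  "class_C m n = {\<psi>. (\<forall>q. 0 \<le> \<psi> q) \<and> (\<forall>a b. 1 \<le> a \<longrightarrow> a \<le> b \<longrightarrow> \<psi> b \<le> \<psi> a) \<and>
      summable (\<lambda>k. real (Suc k) ^ (n - 1) * \<psi> (Suc k) ^ m)}"

definition Lambda_set :: "((real^'n^'m) \<times> (real^'m)) set" where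
  "Lambda_set = (\<Union>\<psi> \<in> class_C CARD('m) CARD('n). W_set \<psi>)"

definition Bad_set :: "((real^'n^'m) \<times> (real^'m)) set" where
  "Bad_set = {(A :: real^'n^'m, \<gamma> :: real^'m). A \<in> unit_cube_mat \<and> \<gamma> \<in> unit_cube_vec \<and>
      Liminf (filtercomap qnorm sequentially)
        (\<lambda>q :: int^'n. ereal (real (qnorm q) ^ CARD('n) * distZ (matvec_int A q - \<gamma>) ^ CARD('m))) > 0}"

end

theory Submission
  imports Defs
begin

text \<open>If \<open>\<psi> \<in> C\<close>, monotonicity and the convergence of \<open>\<Sum> q^(n-1) \<psi>(q)^m\<close> force
  \<open>q^n \<psi>(q)^m \<rightarrow> 0\<close>, so along the infinitely many solutions of
  \<open>\<langle>Aq - \<gamma>\<rangle> < \<psi>(\<parallel>q\<parallel>)\<close> the quantity \<open>\<parallel>q\<parallel>^n \<langle>Aq - \<gamma>\<rangle>^m\<close> tends to \<open>0\<close>: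
  \<open>(A, \<gamma>)\<close> is not badly approximable.
  Conversely, if the liminf is \<open>0\<close>, pick \<open>q\<^sub>k\<close> with \<open>\<parallel>q\<^sub>k\<parallel> > k\<close> and
  \<open>\<parallel>q\<^sub>k\<parallel>^n \<langle>Aq\<^sub>k - \<gamma>\<rangle>^m < 2^-k\<close>. The decreasing function given by
  \<open>\<psi>(t)^m = \<Sum>{2^-k / \<parallel>q\<^sub>k\<parallel>^n | t \<le> \<parallel>q\<^sub>k\<parallel>}\<close> lies in \<open>C\<close>, since
  \<open>\<Sum>\<^sub>t t^(n-1) \<psi>(t)^m \<le> \<Sum>\<^sub>k 2^-k\<close>, and every \<open>q\<^sub>k\<close> solves
  \<open>\<langle>Aq - \<gamma>\<rangle> < \<psi>(\<parallel>q\<parallel>)\<close>.\<close>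

lemma supnorm_nonneg: "0 \<le> supnorm (y :: real^'m)"
proof -
  have "\<bar>y$i\<bar> \<le> supnorm y" for i
    unfolding supnorm_def by (rule Max_ge) auto
  then show ?thesis
    by (meson abs_ge_zero order_trans)
qed

lemma distZ_nonneg: "0 \<le> distZ (y :: real^'m)"
  unfolding distZ_def by (rule cInf_greatest) (use supnorm_nonneg in auto)

lemma nat_abs_nth_le_qnorm: "nat \<bar>q$i\<bar> \<le> qnorm q"
  unfolding qnorm_def by (rule Max_ge) auto

lemma finite_qnorm_le: "finite {q :: int^'n. qnorm q \<le> N}"
proof -
  have "{q :: int^'n. qnorm q \<le> N} \<subseteq> vec_lambda ` (\<Pi>\<^sub>E i\<in>UNIV. {-int N..int N})"
  proof
    fix q :: "int^'n"
    assume "q \<in> {q. qnorm q \<le> N}"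
    then have "q$i \<in> {-int N..int N}" for i
      using nat_abs_nth_le_qnorm[of q i] by auto
    then have "vec_nth q \<in> (\<Pi>\<^sub>E i\<in>UNIV. {-int N..int N})"
      by auto
    then show "q \<in> vec_lambda ` (\<Pi>\<^sub>E i\<in>UNIV. {-int N..int N})"
      by (metis image_eqI vec_nth_inverse)
  qed
  then show ?thesis
    by (rule finite_subset) (intro finite_imageI finite_PiE, simp_all)
qed

lemma infinite_iff_qnorm_unbounded:
  "infinite (S :: (int^'n) set) \<longleftrightarrow> (\<forall>N. \<exists>q\<in>S. N < qnorm q)"
proof
  assume "infinite S"
  show "\<forall>N. \<exists>q\<in>S. N < qnorm q"
  proof (rule ccontr)
    assume "\<not> (\<forall>N. \<exists>q\<in>S. N < qnorm q)"
    then obtain N where "S \<subseteq> {q. qnorm q \<le> N}"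
      by (auto simp: not_less)
    with \<open>infinite S\<close> show False
      using finite_qnorm_le finite_subset by blast
  qed
next
  assume unbounded: "\<forall>N. \<exists>q\<in>S. N < qnorm q"
  show "infinite S"
  proof
    assume "finite S"
    then obtain q where "q \<in> S" "Max (qnorm ` S) < qnorm q"
      using unbounded by blast
    with \<open>finite S\<close> show False
      by (meson Max_ge finite_imageI imageI not_le)
  qed
qed

lemma ereal_Liminf_filtercomap_at_top_pos_iff:
  fixes g :: "'a \<Rightarrow> 'b :: linorder" and f :: "'a \<Rightarrow> real"
  shows "0 < Liminf (filtercomap g at_top) (\<lambda>x. ereal (f x))
    \<longleftrightarrow> (\<exists>r>0. \<exists>N. \<forall>x. N \<le> g x \<longrightarrow> r < f x)"
proof
  assume "0 < Liminf (filtercomap g at_top) (\<lambda>x. ereal (f x))"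
  then obtain r where r: "0 < r" "ereal r < Liminf (filtercomap g at_top) (\<lambda>x. ereal (f x))"
    using ereal_dense2 by force
  then have "\<forall>\<^sub>F x in filtercomap g at_top. r < f x"
    using less_LiminfD by fastforce
  with r(1) show "\<exists>r>0. \<exists>N. \<forall>x. N \<le> g x \<longrightarrow> r < f x"
    unfolding eventually_filtercomap_at_top_linorder by blast
next
  assume "\<exists>r>0. \<exists>N. \<forall>x. N \<le> g x \<longrightarrow> r < f x"
  then obtain r where r: "0 < r" "\<forall>\<^sub>F x in filtercomap g at_top. ereal r \<le> ereal (f x)"
    unfolding eventually_filtercomap_at_top_linorder by (meson less_imp_le ereal_less_eq(3))
  then have "ereal r \<le> Liminf (filtercomap g at_top) (\<lambda>x. ereal (f x))"
    by (intro Liminf_bounded)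
  with r(1) show "0 < Liminf (filtercomap g at_top) (\<lambda>x. ereal (f x))"
    using ereal_less(2) less_le_trans by blast
qed

lemma Bad_set_iff:
  "(A, \<gamma>) \<in> (Bad_set :: ((real^'n^'m) \<times> (real^'m)) set) \<longleftrightarrow>
    A \<in> unit_cube_mat \<and> \<gamma> \<in> unit_cube_vec \<and>
    (\<exists>r>0. \<exists>N. \<forall>q :: int^'n. N \<le> qnorm q \<longrightarrow>
      r < real (qnorm q) ^ CARD('n) * distZ (matvec_int A q - \<gamma>) ^ CARD('m))"
  unfolding Bad_set_def
  by (simp only: ereal_Liminf_filtercomap_at_top_pos_iff mem_Collect_eq case_prod_conv)

lemma summable_antimono_imp_power_mult_tendsto_0:
  fixes a :: "nat \<Rightarrow> real" and n :: nat
  assumes nonneg: "\<And>k. 0 \<le> a k"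
    and antimono: "\<And>i j. 1 \<le> i \<Longrightarrow> i \<le> j \<Longrightarrow> a j \<le> a i"
    and summable: "summable (\<lambda>k. real (Suc k) ^ (n - 1) * a (Suc k))"
    and "1 \<le> n"
  shows "(\<lambda>t. real t ^ n * a t) \<longlonglongrightarrow> 0"
proof (rule LIMSEQ_I)
  fix r :: real
  assume "0 < r"
  define b where "b k = real (Suc k) ^ (n - 1) * a (Suc k)" for k
  obtain M where M: "\<And>i j. M \<le> i \<Longrightarrow> norm (sum b {i..<j}) < r / 2 ^ n"
    using summable \<open>0 < r\<close> unfolding summable_Cauchy b_def
    by (metis zero_less_divide_iff zero_less_power zero_less_numeral)
  have "norm (real t ^ n * a t - 0) < r" if "2 * M \<le> t" for t
  proof -
    define c where "c = (real t / 2) ^ (n - 1) * a t"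
    \<comment> \<open>each of the \<open>t - t div 2 \<ge> t/2\<close> terms of the Cauchy block \<open>{t div 2..<t}\<close>
      is at least \<open>c\<close>\<close>
    have "c \<le> b k" if "k \<in> {t div 2..<t}" for k
    proof -
      have "real t / 2 \<le> real (Suc k)"
        using that by auto
      then have "(real t / 2) ^ (n - 1) \<le> real (Suc k) ^ (n - 1)"
        by (rule power_mono) simp
      moreover have "a t \<le> a (Suc k)"
        using that antimono by simp
      ultimately show ?thesis
        unfolding b_def c_def by (intro mult_mono) (use nonneg in auto)
    qed
    then have "real (t - t div 2) * c \<le> sum b {t div 2..<t}"
      using sum_mono[of "{t div 2..<t}" "\<lambda>_. c" b] by simp
    moreover have "real t / 2 * c \<le> real (t - t div 2) * c"
      using nonneg by (intro mult_right_mono) (auto simp: c_def)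
    moreover have "sum b {t div 2..<t} < r / 2 ^ n"
      using M[of "t div 2" t] that by fastforce
    moreover have "(real t / 2) ^ n * a t = real t / 2 * c"
      unfolding c_def using \<open>1 \<le> n\<close> by (simp add: power_eq_if)
    ultimately have "(real t / 2) ^ n * a t < r / 2 ^ n"
      by linarith
    then have "real t ^ n * a t < r"
      by (simp add: power_divide field_simps)
    with nonneg[of t] show ?thesis
      by simp
  qed
  then show "\<exists>N. \<forall>t\<ge>N. norm (real t ^ n * a t - 0) < r"
    by blast
qed

lemma W_set_imp_not_Bad_set:
  fixes A :: "real^'n^'m" and \<gamma> :: "real^'m"
  assumes C: "\<psi> \<in> class_C CARD('m) CARD('n)" and W: "(A, \<gamma>) \<in> W_set \<psi>"
  shows "(A, \<gamma>) \<notin> Bad_set"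
proof
  assume "(A, \<gamma>) \<in> Bad_set"
  define d where "d q = distZ (matvec_int A q - \<gamma>)" for q :: "int^'n"
  obtain r N where "0 < r"
    and bad: "\<And>q. N \<le> qnorm q \<Longrightarrow> r < real (qnorm q) ^ CARD('n) * d q ^ CARD('m)"
    using \<open>(A, \<gamma>) \<in> Bad_set\<close> unfolding Bad_set_iff d_def by blast
  have "(\<lambda>t. real t ^ CARD('n) * \<psi> t ^ CARD('m)) \<longlonglongrightarrow> 0"
    using C unfolding class_C_def
    by (intro summable_antimono_imp_power_mult_tendsto_0) (auto simp: Suc_le_eq)
  from order_tendstoD(2)[OF this \<open>0 < r\<close>]
  obtain N' where small: "\<And>t. N' \<le> t \<Longrightarrow> real t ^ CARD('n) * \<psi> t ^ CARD('m) < r"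
    unfolding eventually_sequentially by blast
  have "infinite {q. d q < \<psi> (qnorm q)}"
    using W unfolding W_set_def d_def by simp
  then obtain q where q: "d q < \<psi> (qnorm q)" "max N N' < qnorm q"
    unfolding infinite_iff_qnorm_unbounded by blast
  then have "d q ^ CARD('m) \<le> \<psi> (qnorm q) ^ CARD('m)"
    using distZ_nonneg unfolding d_def by (intro power_mono) auto
  then have "real (qnorm q) ^ CARD('n) * d q ^ CARD('m)
      \<le> real (qnorm q) ^ CARD('n) * \<psi> (qnorm q) ^ CARD('m)"
    by (rule mult_left_mono) simp
  moreover have "N \<le> qnorm q" "N' \<le> qnorm q"
    using q(2) by auto
  ultimately show False
    using bad[of q] small[of "qnorm q"] by linarith
qed

lemma sum_Suc_power_indicator_le:
  assumes "1 \<le> n" "0 \<le> c"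
  shows "(\<Sum>j<T. real (Suc j) ^ (n - 1) * (if Suc j \<le> N then c else 0)) \<le> real N ^ n * c"
proof -
  have "(\<Sum>j<T. real (Suc j) ^ (n - 1) * (if Suc j \<le> N then c else 0))
      = (\<Sum>j\<in>{..<T} \<inter> {..<N}. real (Suc j) ^ (n - 1) * c)"
    by (auto simp: sum.inter_restrict Suc_le_eq intro!: sum.cong)
  also have "\<dots> \<le> (\<Sum>j<N. real (Suc j) ^ (n - 1) * c)"
    by (rule sum_mono2) (use \<open>0 \<le> c\<close> in auto)
  also have "\<dots> \<le> real (card {..<N}) * (real N ^ (n - 1) * c)"
    by (rule sum_bounded_above) (use \<open>0 \<le> c\<close> in \<open>auto intro!: mult_right_mono power_mono\<close>)
  also have "\<dots> = real N ^ n * c"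
    using \<open>1 \<le> n\<close> by (simp add: power_eq_if)
  finally show ?thesis .
qed

definition tail_weight :: "(nat \<Rightarrow> nat) \<Rightarrow> (nat \<Rightarrow> real) \<Rightarrow> nat \<Rightarrow> real" where
  "tail_weight N e t = (\<Sum>k. if t \<le> N k then e k else 0)"

context
  fixes e :: "nat \<Rightarrow> real"
  assumes e_nonneg: "\<And>k. 0 \<le> e k" and summable_e: "summable e"
begin

lemma summable_tail_weight_terms: "summable (\<lambda>k. if t \<le> N k then e k else 0)"
  by (rule summable_comparison_test'[OF summable_e, of 0]) (use e_nonneg in auto)

lemma tail_weight_nonneg: "0 \<le> tail_weight N e t"
  unfolding tail_weight_def
  by (intro suminf_nonneg summable_tail_weight_terms) (simp add: e_nonneg)

lemma tail_weight_antimono: "s \<le> t \<Longrightarrow> tail_weight N e t \<le> tail_weight N e s"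
  unfolding tail_weight_def
  by (intro suminf_le summable_tail_weight_terms) (use e_nonneg in auto)

lemma le_tail_weight: "e k \<le> tail_weight N e (N k)"
proof -
  have "e k = (\<Sum>i\<in>{k}. if N k \<le> N i then e i else 0)"
    by simp
  also have "\<dots> \<le> tail_weight N e (N k)"
    unfolding tail_weight_def
    by (intro sum_le_suminf summable_tail_weight_terms) (auto simp: e_nonneg)
  finally show ?thesis .
qed

text \<open>Exchanging the two summations: the block \<open>t \<le> N k\<close> of each \<open>e k\<close> contributes at most
  \<open>N k ^ n * e k\<close>.\<close>
lemma summable_power_mult_tail_weight:
  assumes "1 \<le> n" and summable: "summable (\<lambda>k. real (N k) ^ n * e k)"
  shows "summable (\<lambda>j. real (Suc j) ^ (n - 1) * tail_weight N e (Suc j))"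
proof (rule summableI_nonneg_bounded)
  fix T
  have "(\<Sum>j<T. real (Suc j) ^ (n - 1) * tail_weight N e (Suc j))
      = (\<Sum>k. \<Sum>j<T. real (Suc j) ^ (n - 1) * (if Suc j \<le> N k then e k else 0))"
    unfolding tail_weight_def suminf_mult[OF summable_tail_weight_terms, symmetric]
    by (rule suminf_sum[symmetric]) (intro summable_mult summable_tail_weight_terms)
  also have "\<dots> \<le> (\<Sum>k. real (N k) ^ n * e k)"
    by (intro suminf_le summable summable_sum summable_mult summable_tail_weight_terms
        sum_Suc_power_indicator_le \<open>1 \<le> n\<close> e_nonneg)
  finally show "(\<Sum>j<T. real (Suc j) ^ (n - 1) * tail_weight N e (Suc j))
      \<le> (\<Sum>k. real (N k) ^ n * e k)" .
qed (simp add: tail_weight_nonneg)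

end

lemma class_C_majorant:
  fixes N :: "nat \<Rightarrow> nat" and e :: "nat \<Rightarrow> real"
  assumes "0 < m" "1 \<le> n"
    and N_pos: "\<And>k. 1 \<le> N k" and e_nonneg: "\<And>k. 0 \<le> e k"
    and summable: "summable (\<lambda>k. real (N k) ^ n * e k)"
  obtains \<psi> where "\<psi> \<in> class_C m n" "\<And>k. e k \<le> \<psi> (N k) ^ m"
proof
  have "e k \<le> real (N k) ^ n * e k" for k
    using N_pos[of k] e_nonneg[of k] by (simp add: mult_le_cancel_right1 one_le_power)
  then have summable_e: "summable e"
    by (intro summable_comparison_test'[OF summable, of 0]) (simp add: e_nonneg)
  define \<psi> where "\<psi> t = root m (tail_weight N e t)" for t
  have \<psi>_power: "\<psi> t ^ m = tail_weight N e t" for t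
    unfolding \<psi>_def using \<open>0 < m\<close> tail_weight_nonneg[OF e_nonneg summable_e] by simp
  show "\<psi> \<in> class_C m n"
    unfolding class_C_def \<psi>_power
    using \<open>0 < m\<close> tail_weight_nonneg[OF e_nonneg summable_e]
      tail_weight_antimono[OF e_nonneg summable_e] summable_power_mult_tail_weight[OF e_nonneg summable_e \<open>1 \<le> n\<close> summable]
    by (auto simp: \<psi>_def)
  show "e k \<le> \<psi> (N k) ^ m" for k
    unfolding \<psi>_power by (rule le_tail_weight[OF e_nonneg summable_e])
qed

lemma not_Bad_set_imp_approximating_sequence:
  fixes A :: "real^'n^'m" and \<gamma> :: "real^'m"
  assumes "A \<in> unit_cube_mat" "\<gamma> \<in> unit_cube_vec" "(A, \<gamma>) \<notin> Bad_set"
  obtains qs :: "nat \<Rightarrow> int^'n" where "\<And>k. Suc k \<le> qnorm (qs k)"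
    "\<And>k. real (qnorm (qs k)) ^ CARD('n) * distZ (matvec_int A (qs k) - \<gamma>) ^ CARD('m)
      \<le> (1/2) ^ Suc k"
proof -
  have "\<forall>k. \<exists>q. Suc k \<le> qnorm q \<and>
      real (qnorm q) ^ CARD('n) * distZ (matvec_int A q - \<gamma>) ^ CARD('m) \<le> (1/2) ^ Suc k"
    using assms unfolding Bad_set_iff
    by (metis not_le zero_less_divide_1_iff zero_less_numeral zero_less_power)
  then show thesis
    using that unfolding choice_iff by blast
qed

lemma not_Bad_set_imp_Lambda_set:
  fixes A :: "real^'n^'m" and \<gamma> :: "real^'m"
  assumes "A \<in> unit_cube_mat" "\<gamma> \<in> unit_cube_vec" "(A, \<gamma>) \<notin> Bad_set"
  shows "(A, \<gamma>) \<in> Lambda_set"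
proof -
  define d where "d q = distZ (matvec_int A q - \<gamma>)" for q :: "int^'n"
  obtain qs where qs_large: "\<And>k. Suc k \<le> qnorm (qs k)"
    and qs_good: "\<And>k. real (qnorm (qs k)) ^ CARD('n) * d (qs k) ^ CARD('m) \<le> (1/2) ^ Suc k"
    using not_Bad_set_imp_approximating_sequence[OF assms] unfolding d_def by blast
  define N where "N k = qnorm (qs k)" for k
  define e where "e k = (1/2) ^ k / real (N k) ^ CARD('n)" for k
  have N_pos: "1 \<le> N k" for k
    using qs_large[of k] unfolding N_def by simp
  then have N_power_pos: "0 < real (N k) ^ CARD('n)" for k
    by (simp add: Suc_le_eq)
  have "summable (\<lambda>k. real (N k) ^ CARD('n) * e k)"
    unfolding e_def using N_power_pos by (simp add: less_imp_neq[symmetric])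
  then obtain \<psi> where \<psi>: "\<psi> \<in> class_C CARD('m) CARD('n)"
    and e_le: "\<And>k. e k \<le> \<psi> (N k) ^ CARD('m)"
    by (rule class_C_majorant[rotated 4]) (use N_pos in \<open>auto simp: e_def Suc_le_eq\<close>)
  have "d (qs k) < \<psi> (qnorm (qs k))" for k
  proof -
    have "real (N k) ^ CARD('n) * d (qs k) ^ CARD('m) \<le> (1/2) ^ Suc k"
      using qs_good[of k] unfolding N_def .
    also have "\<dots> < real (N k) ^ CARD('n) * e k"
      unfolding e_def using N_power_pos[of k] by simp
    finally have "d (qs k) ^ CARD('m) < \<psi> (N k) ^ CARD('m)"
      using N_power_pos[of k] e_le[of k] by simp
    then show ?thesis
      unfolding N_def using \<psi> unfolding class_C_def by (blast intro: power_less_imp_less_base)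
  qed
  then have "range qs \<subseteq> {q. d q < \<psi> (qnorm q)}"
    by auto
  moreover have "infinite (range qs)"
    unfolding infinite_iff_qnorm_unbounded using qs_large by (meson Suc_le_lessD rangeI)
  ultimately have "(A, \<gamma>) \<in> W_set \<psi>"
    unfolding W_set_def d_def using assms infinite_super by auto
  with \<psi> show ?thesis
    unfolding Lambda_set_def by blast
qed

lemma Lambda_set_iff_not_Bad_set:
  fixes A :: "real^'n^'m" and \<gamma> :: "real^'m"
  assumes "A \<in> unit_cube_mat" "\<gamma> \<in> unit_cube_vec"
  shows "(A, \<gamma>) \<in> Lambda_set \<longleftrightarrow> (A, \<gamma>) \<notin> Bad_set"
  using W_set_imp_not_Bad_set not_Bad_set_imp_Lambda_set assms
  unfolding Lambda_set_def by blast

lemma Lambda_set_subset_cube: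
  "(Lambda_set :: ((real^'n^'m) \<times> (real^'m)) set) \<subseteq> unit_cube_mat \<times> unit_cube_vec"
  unfolding Lambda_set_def W_set_def by auto

theorem corollary1p2:
  shows "(\<forall>A :: real^'n^'m. A \<in> unit_cube_mat \<longrightarrow>
            {\<gamma>. (A, \<gamma>) \<in> (Lambda_set :: ((real^'n^'m) \<times> (real^'m)) set)}
              = unit_cube_vec - {\<gamma>. (A, \<gamma>) \<in> (Bad_set :: ((real^'n^'m) \<times> (real^'m)) set)})
       \<and> (\<forall>\<gamma> :: real^'m. \<gamma> \<in> unit_cube_vec \<longrightarrow>
            {A. (A, \<gamma>) \<in> (Lambda_set :: ((real^'n^'m) \<times> (real^'m)) set)}
              = unit_cube_mat - {A. (A, \<gamma>) \<in> (Bad_set :: ((real^'n^'m) \<times> (real^'m)) set)})"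
  using Lambda_set_iff_not_Bad_set Lambda_set_subset_cube by blast

end
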